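(* Let $g_c$ be a density generator, $\mu\in\mathbb{R}$, $\sigma>0$, $\rho\in(-1,1)$, and set $\sigma_\rho=\sigma\sqrt{2(1-\rho)}$. Let $Z_\rho$ be the random variable and $A$, $A^{-1}$ the functions defined in the context. Then $A^{-1}(Z_\rho)\sim {\rm ULS}(\sigma_\rho,g_c)$. Conversely, if $W\sim {\rm ULS}(\sigma_\rho,g_c)$, then $A(W)$ has the same distribution as $Z_\rho$.
   Context: A density generator is a function $g_c:[0,\infty)\to[0,\infty)$ with $0<\int_0^\infty g_c(u)\,{\rm d}u<\infty$; put $Z_{g_c}=\pi\int_0^\infty g_c(u)\,{\rm d}u$ and $\eta=\exp(\mu)$. A random variable $W$ with support $(0,1)$ follows the unit-log-symmetric distribution ${\rm ULS}(\sigma_\rho,g_c)$ if its PDF is $$f_W(w)=\frac{1}{w(1-w)\sigma^2\sqrt{1-\rho^2}\,Z_{g_c}}\int_0^\infty \frac1t\, g_c\!\left(\frac{\tilde t_w^{\,2}-2\rho\tilde t_w\tilde t+\tilde t^{\,2}}{1-\rho^2}\right){\rm d}t,\quad 0<w<1,$$ where $t_w=\frac{w}{1-w}t$, $\tilde t_w=\frac1\sigma\log(t_w/\eta)$, $\tilde t=\frac1\sigma\log(t/\eta)$. Let $U_1,U_2,R,D$ be mutually independent with $\mathbb{P}(U_i=-1)=\mathbb{P}(U_i=1)=1/2$, $D$ having PDF $2/(\pi\sqrt{1-d^2})$ on $(0,1)$, and $R$ having PDF $2rg_c(r^2)/\int_0^\infty g_c(u)\,{\rm d}u$ on $(0,\infty)$.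 Set $Z_1=RDU_1$, $Z_2=R\sqrt{1-D^2}\,U_2$ and $$Z_\rho=\frac{1}{\sqrt{2(1-\rho)}}\big[(1-\rho)Z_1-\sqrt{1-\rho^2}\,Z_2\big].$$ Define $A(w)=\frac{1}{\sigma_\rho}\log\frac{w}{1-w}$ for $w\in(0,1)$, with inverse $A^{-1}(x)=\frac{1}{1+\exp(-\sigma_\rho x)}$ for $x\in\mathbb{R}$. *)

theory Defs
  imports "HOL-Probability.Probability"
begin

definition density_generator :: "(real \<Rightarrow> real) \<Rightarrow> bool" where
  "density_generator g \<longleftrightarrow> g \<in> borel_measurable borel \<and> (\<forall>u\<ge>0. 0 \<le> g u) \<and>
     set_integrable lborel {0..} g \<and> 0 < (LINT u:{0..}|lborel. g u)"

definition Zg :: "(real \<Rightarrow> real) \<Rightarrow> real" where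
  "Zg g = pi * (LINT u:{0..}|lborel. g u)"

definition uls_pdf :: "real \<Rightarrow> real \<Rightarrow> real \<Rightarrow> (real \<Rightarrow> real) \<Rightarrow> real \<Rightarrow> ennreal" where
  "uls_pdf mu sig rho g w =
    (if 0 < w \<and> w < 1 then
       ennreal (1 / (w * (1 - w) * sig\<^sup>2 * sqrt (1 - rho\<^sup>2) * Zg g)) *
       (\<integral>\<^sup>+ t. indicator {0<..} t *
          ennreal ((1 / t) *
            (let eta = exp mu;
                 tw = w / (1 - w) * t;
                 ttw = (1 / sig) * ln (tw / eta);
                 tt = (1 / sig) * ln (t / eta)
             in g ((ttw\<^sup>2 - 2 * rho * ttw * tt + tt\<^sup>2) / (1 - rho\<^sup>2)))) \<partial>lborel)
     else 0)"

definition A_map :: "real \<Rightarrow> real \<Rightarrow> real" where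
  "A_map sigrho w = (1 / sigrho) * ln (w / (1 - w))"

definition A_inv :: "real \<Rightarrow> real \<Rightarrow> real" where
  "A_inv sigrho x = 1 / (1 + exp (- sigrho * x))"

end

theory Submission
  imports Defs
begin

(* Put cos a = sqrt ((1 - rho) / 2) and sin a = sqrt ((1 + rho) / 2), so that
   Z_rho = R (cos a D U1 - sin a sqrt (1 - D^2) U2). With D = sin t for t uniform on
   (0, pi/2), the independent random signs make (D U1, sqrt (1 - D^2) U2) uniform on the
   unit circle, hence its coordinate in the direction rotated by a is arcsine distributed.
   An arcsine variable times the independent radius R is a coordinate of the spherical law
   with generator g, so Z_rho has density f z = (1 / Zg g) * (integral of g (z^2 + y^2) dy).
   Substituting t = exp x in the ULS density and completing the square in its quadratic
   form shows that the ULS density is f (A w) * A' w on (0, 1): it is the image of f under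
   the increasing bijection A^-1. Both claims follow, the converse because A (A^-1 z) = z. *)

section \<open>Substitution and symmetry for integrals on the real line\<close>

lemma image_atLeastAtMost_deriv_nonneg:
  fixes \<phi> \<phi>' :: "real \<Rightarrow> real"
  assumes "l \<le> u"
    and deriv: "\<And>x. x \<in> {l..u} \<Longrightarrow> (\<phi> has_real_derivative \<phi>' x) (at x)"
    and nonneg: "\<And>x. x \<in> {l..u} \<Longrightarrow> 0 \<le> \<phi>' x"
  shows "\<phi> ` {l..u} = {\<phi> l..\<phi> u}"
proof
  have mono: "\<phi> x \<le> \<phi> y" if "l \<le> x" "x \<le> y" "y \<le> u" for x y
    using that by (intro deriv_nonneg_imp_mono[of x y \<phi> \<phi>']) (auto intro!: deriv nonneg)
  show "\<phi> ` {l..u} \<subseteq> {\<phi> l..\<phi> u}"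
    using mono \<open>l \<le> u\<close> by auto
  show "{\<phi> l..\<phi> u} \<subseteq> \<phi> ` {l..u}"
  proof
    fix y
    assume "y \<in> {\<phi> l..\<phi> u}"
    moreover have "continuous_on {l..u} \<phi>"
      using deriv by (intro continuous_at_imp_continuous_on) (blast intro: DERIV_isCont)
    ultimately obtain x where "l \<le> x" "x \<le> u" "\<phi> x = y"
      using IVT'[of \<phi> l y u] \<open>l \<le> u\<close> by auto
    then show "y \<in> \<phi> ` {l..u}"
      by auto
  qed
qed

lemma nn_integral_substitution_einterval:
  fixes f :: "real \<Rightarrow> ennreal" and \<phi> \<phi>' :: "real \<Rightarrow> real" and a b :: ereal
  assumes "a < b"
    and [measurable]: "f \<in> borel_measurable borel" "\<phi> \<in> borel_measurable borel" "\<phi>' \<in> borel_measurable borel"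
    and deriv: "\<And>x. x \<in> einterval a b \<Longrightarrow> (\<phi> has_real_derivative \<phi>' x) (at x)"
    and cont: "continuous_on (einterval a b) \<phi>'"
    and nonneg: "\<And>x. x \<in> einterval a b \<Longrightarrow> 0 \<le> \<phi>' x"
  shows "(\<integral>\<^sup>+x. f (\<phi> x) * ennreal (\<phi>' x) * indicator (einterval a b) x \<partial>lborel)
       = (\<integral>\<^sup>+y. f y * indicator (\<phi> ` einterval a b) y \<partial>lborel)"
proof -
  obtain u l :: "nat \<Rightarrow> real" where S: "einterval a b = (\<Union>n. {l n..u n})"
    and u: "incseq u" and l: "decseq l" and lu: "\<And>n. l n < u n"
    by (rule einterval_Icc_approximation[OF \<open>a < b\<close>]) blast
  have sub: "{l n..u n} \<subseteq> einterval a b" for n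
    using S by auto
  have inc: "incseq (\<lambda>n. {l n..u n})"
    using l u by (auto simp: incseq_def decseq_def intro: order_trans)
  then have inc_image: "incseq (\<lambda>n. \<phi> ` {l n..u n})"
    by (simp add: incseq_def image_mono)
  have image: "\<phi> ` {l n..u n} = {\<phi> (l n)..\<phi> (u n)}" for n
    using lu[of n] sub[of n] by (intro image_atLeastAtMost_deriv_nonneg) (auto intro!: deriv nonneg)
  let ?F = "density lborel f" and ?G = "density lborel (\<lambda>x. f (\<phi> x) * ennreal (\<phi>' x))"
  have "emeasure ?G {l n..u n} = emeasure ?F (\<phi> ` {l n..u n})" for n
  proof -
    have "emeasure ?G {l n..u n} = (\<integral>\<^sup>+x. f (\<phi> x) * ennreal (\<phi>' x) * indicator {l n..u n} x \<partial>lborel)"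
      by (simp add: emeasure_density)
    also have "\<dots> = (\<integral>\<^sup>+y. f y * indicator {\<phi> (l n)..\<phi> (u n)} y \<partial>lborel)"
      using lu[of n] sub[of n]
      by (intro nn_integral_substitution_aux[symmetric] continuous_on_subset[OF cont] deriv nonneg) auto
    finally show ?thesis
      by (simp add: image emeasure_density)
  qed
  moreover have "emeasure ?G (\<Union>n. {l n..u n}) = (SUP n. emeasure ?G {l n..u n})"
    using inc by (intro SUP_emeasure_incseq[symmetric]) auto
  moreover have "(SUP n. emeasure ?F (\<phi> ` {l n..u n})) = emeasure ?F (\<Union>n. \<phi> ` {l n..u n})"
    using inc_image by (intro SUP_emeasure_incseq) (auto simp: image)
  ultimately show ?thesis
    by (simp add: S image_UN image emeasure_density)
qed

lemma nn_integral_split_greaterThanLessThan: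
  fixes F :: "real \<Rightarrow> ennreal"
  assumes [measurable]: "F \<in> borel_measurable borel" and "a \<le> m" "m \<le> b"
  shows "(\<integral>\<^sup>+x. F x * indicator {a<..<b} x \<partial>lborel) =
         (\<integral>\<^sup>+x. F x * indicator {a<..<m} x \<partial>lborel) + (\<integral>\<^sup>+x. F x * indicator {m<..<b} x \<partial>lborel)"
proof -
  have "AE x in lborel. F x * indicator {a<..<b} x = F x * indicator {a<..<m} x + F x * indicator {m<..<b} x"
    using AE_lborel_singleton[of m] by eventually_elim (use assms in \<open>auto split: split_indicator\<close>)
  then show ?thesis
    by (subst nn_integral_add[symmetric]) (auto intro: nn_integral_cong_AE)
qed

lemma nn_integral_shift_greaterThanLessThan:
  fixes F :: "real \<Rightarrow> ennreal"
  assumes [measurable]: "F \<in> borel_measurable borel"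
  shows "(\<integral>\<^sup>+x. F (x + c) * indicator {a<..<b} x \<partial>lborel) = (\<integral>\<^sup>+x. F x * indicator {a+c<..<b+c} x \<partial>lborel)"
  by (subst nn_integral_real_affine[where c = 1 and t = c])
    (auto simp: add.commute intro!: nn_integral_cong split: split_indicator)

lemma nn_integral_reflect_greaterThanLessThan:
  fixes F :: "real \<Rightarrow> ennreal"
  assumes [measurable]: "F \<in> borel_measurable borel"
  shows "(\<integral>\<^sup>+x. F (- x) * indicator {a<..<b} x \<partial>lborel) = (\<integral>\<^sup>+x. F x * indicator {-b<..<-a} x \<partial>lborel)"
  by (subst nn_integral_real_affine[where c = "-1" and t = 0])
    (auto intro!: nn_integral_cong split: split_indicator)

lemma nn_integral_periodic_window:
  fixes F :: "real \<Rightarrow> ennreal"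
  assumes [measurable]: "F \<in> borel_measurable borel"
    and periodic: "\<And>x. F (x + p) = F x" and "a \<le> b" "b \<le> a + p"
  shows "(\<integral>\<^sup>+x. F x * indicator {a<..<a+p} x \<partial>lborel) = (\<integral>\<^sup>+x. F x * indicator {b<..<b+p} x \<partial>lborel)"
proof -
  have "(\<integral>\<^sup>+x. F x * indicator {a<..<b} x \<partial>lborel) = (\<integral>\<^sup>+x. F x * indicator {a+p<..<b+p} x \<partial>lborel)"
    using nn_integral_shift_greaterThanLessThan[of F p a b] by (simp add: periodic)
  then show ?thesis
    using assms by (simp add: nn_integral_split_greaterThanLessThan[of F a b "a+p"]
        nn_integral_split_greaterThanLessThan[of F b "a+p" "b+p"] add.commute)
qed

lemma nn_integral_add_reflection:
  fixes F :: "real \<Rightarrow> ennreal"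
  assumes [measurable]: "F \<in> borel_measurable borel"
  shows "(\<integral>\<^sup>+x. (F x + F (- x)) * indicator {-a<..<a} x \<partial>lborel) = 2 * (\<integral>\<^sup>+x. F x * indicator {-a<..<a} x \<partial>lborel)"
  using nn_integral_reflect_greaterThanLessThan[of F "-a" a]
  by (simp add: distrib_right nn_integral_add mult_2)

lemma nn_integral_even:
  fixes G :: "real \<Rightarrow> ennreal"
  assumes [measurable]: "G \<in> borel_measurable borel" and even: "\<And>y. G (- y) = G y"
  shows "(\<integral>\<^sup>+y. G y \<partial>lborel) = 2 * (\<integral>\<^sup>+y. G y * indicator {0<..} y \<partial>lborel)"
proof -
  have "AE y in lborel. G y = G y * indicator {..<0} y + G y * indicator {0<..} y"
    using AE_lborel_singleton[of 0] by eventually_elim (auto split: split_indicator)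
  then have "(\<integral>\<^sup>+y. G y \<partial>lborel)
      = (\<integral>\<^sup>+y. G y * indicator {..<0} y \<partial>lborel) + (\<integral>\<^sup>+y. G y * indicator {0<..} y \<partial>lborel)"
    by (subst nn_integral_add[symmetric]) (auto intro: nn_integral_cong_AE)
  also have "(\<integral>\<^sup>+y. G y * indicator {..<0} y \<partial>lborel) = (\<integral>\<^sup>+y. G y * indicator {0<..} y \<partial>lborel)"
    by (subst nn_integral_real_affine[where c = "-1" and t = 0])
      (auto simp: even intro!: nn_integral_cong split: split_indicator)
  finally show ?thesis
    by (simp add: mult_2)
qed

lemma nn_integral_even_periodic_shifts:
  fixes K :: "real \<Rightarrow> ennreal"
  assumes [measurable]: "K \<in> borel_measurable borel"
    and even: "\<And>x. K (- x) = K x" and periodic: "\<And>x. K (x + p) = K x"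
    and \<alpha>: "0 \<le> \<alpha>" "2 * \<alpha> \<le> p"
  shows "(\<integral>\<^sup>+x. (K (x - \<alpha>) + K (x + \<alpha>)) * indicator {0<..<p/2} x \<partial>lborel)
       = (\<integral>\<^sup>+x. K x * indicator {-(p/2)<..<p/2} x \<partial>lborel)"
proof -
  define I where "I a b = (\<integral>\<^sup>+x. K x * indicator {a<..<b} x \<partial>lborel)" for a b
  have "(\<integral>\<^sup>+x. (K (x - \<alpha>) + K (x + \<alpha>)) * indicator {0<..<p/2} x \<partial>lborel)
      = (\<integral>\<^sup>+x. K (x - \<alpha>) * indicator {0<..<p/2} x \<partial>lborel)
        + (\<integral>\<^sup>+x. K (x + \<alpha>) * indicator {0<..<p/2} x \<partial>lborel)"
    by (simp add: distrib_right nn_integral_add)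
  also have "(\<integral>\<^sup>+x. K (x - \<alpha>) * indicator {0<..<p/2} x \<partial>lborel) = I (- \<alpha>) (p/2 - \<alpha>)"
    using nn_integral_shift_greaterThanLessThan[of K "- \<alpha>" 0 "p/2"] by (simp add: I_def)
  also have "\<dots> = I (\<alpha> - p/2) \<alpha>"
    using nn_integral_reflect_greaterThanLessThan[of K "\<alpha> - p/2" \<alpha>] by (simp add: I_def even)
  also have "(\<integral>\<^sup>+x. K (x + \<alpha>) * indicator {0<..<p/2} x \<partial>lborel) = I \<alpha> (\<alpha> + p/2)"
    using nn_integral_shift_greaterThanLessThan[of K \<alpha> 0 "p/2"] by (simp add: I_def add.commute)
  also have "I (\<alpha> - p/2) \<alpha> + I \<alpha> (\<alpha> + p/2) = I (-(p/2)) (p/2)"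
    using \<alpha> nn_integral_periodic_window[of K p "-(p/2)" "\<alpha> - p/2"]
    by (simp add: I_def periodic add.commute
        nn_integral_split_greaterThanLessThan[of K "\<alpha> - p/2" \<alpha> "\<alpha> + p/2"])
  finally show ?thesis
    by (simp add: I_def)
qed

lemma nn_integral_density_rescale:
  fixes p h :: "real \<Rightarrow> ennreal"
  assumes [measurable]: "p \<in> borel_measurable borel" "h \<in> borel_measurable borel" and "0 < r"
  shows "(\<integral>\<^sup>+t. p t * h (r * t) \<partial>lborel) = (\<integral>\<^sup>+z. ennreal (1 / r) * p (z / r) * h z \<partial>lborel)"
proof -
  have "(\<integral>\<^sup>+z. ennreal (1 / r) * p (z / r) * h z \<partial>lborel)
      = ennreal r * (\<integral>\<^sup>+t. ennreal (1 / r) * (p t * h (r * t)) \<partial>lborel)"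
    using \<open>0 < r\<close> by (subst nn_integral_real_affine[where c = r and t = 0]) (simp_all add: mult.assoc)
  also have "\<dots> = (ennreal r * ennreal (1 / r)) * (\<integral>\<^sup>+t. p t * h (r * t) \<partial>lborel)"
    by (simp add: nn_integral_cmult mult.assoc)
  also have "ennreal r * ennreal (1 / r) = 1"
    using \<open>0 < r\<close> by (simp add: ennreal_mult [symmetric])
  finally show ?thesis
    by simp
qed

lemma sqrt_one_minus_sin_squared:
  assumes "-(pi/2) \<le> x" "x \<le> pi/2"
  shows "sqrt (1 - (sin x)\<^sup>2) = cos x"
  using cos_ge_zero[OF assms] by (simp add: cos_squared_eq[symmetric])

lemma nn_integral_sin_substitution:
  fixes k :: "real \<Rightarrow> ennreal"
  assumes [measurable]: "k \<in> borel_measurable borel" and ab: "-(pi/2) \<le> a" "a < b" "b \<le> pi/2"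
  shows "(\<integral>\<^sup>+t. ennreal (1 / sqrt (1 - t\<^sup>2)) * k t * indicator {sin a<..<sin b} t \<partial>lborel)
       = (\<integral>\<^sup>+x. k (sin x) * indicator {a<..<b} x \<partial>lborel)"
proof -
  define f where "f t = ennreal (1 / sqrt (1 - t\<^sup>2)) * k t * indicator {sin a<..<sin b} t" for t
  have "(\<integral>\<^sup>+t. f t \<partial>lborel) = (\<integral>\<^sup>+t. f t * indicator {sin a..sin b} t \<partial>lborel)"
    by (auto simp: f_def intro!: nn_integral_cong split: split_indicator)
  also have "\<dots> = (\<integral>\<^sup>+x. f (sin x) * ennreal (cos x) * indicator {a..b} x \<partial>lborel)"
    using ab by (intro nn_integral_substitution_aux)
      (auto simp: f_def intro!: derivative_eq_intros continuous_on_cos continuous_on_id cos_ge_zero)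
  also have "\<dots> = (\<integral>\<^sup>+x. k (sin x) * indicator {a<..<b} x \<partial>lborel)"
  proof (intro nn_integral_cong)
    fix x
    show "f (sin x) * ennreal (cos x) * indicator {a..b} x = k (sin x) * indicator {a<..<b} x"
    proof (cases "a < x \<and> x < b")
      case True
      with ab have "sin a < sin x" "sin x < sin b" "0 < cos x"
        by (auto intro!: sin_monotone_2pi cos_gt_zero_pi)
      moreover have "sqrt (1 - (sin x)\<^sup>2) = cos x"
        using True ab by (intro sqrt_one_minus_sin_squared) auto
      ultimately have "f (sin x) * ennreal (cos x) = k (sin x) * (ennreal (1 / cos x) * ennreal (cos x))"
        by (simp add: f_def ac_simps)
      also have "\<dots> = k (sin x)"
        using \<open>0 < cos x\<close> by (simp add: ennreal_mult [symmetric])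
      finally show ?thesis
        using True by simp
    qed (auto simp: f_def split: split_indicator)
  qed
  finally show ?thesis
    by (simp add: f_def)
qed

lemma nn_integral_hypot_substitution:
  fixes F :: "real \<Rightarrow> ennreal" and z :: real
  assumes [measurable]: "F \<in> borel_measurable borel"
  shows "(\<integral>\<^sup>+y. F (sqrt (z\<^sup>2 + y\<^sup>2)) * ennreal (y / sqrt (z\<^sup>2 + y\<^sup>2)) * indicator {0<..} y \<partial>lborel)
       = (\<integral>\<^sup>+r. F r * indicator {\<bar>z\<bar><..} r \<partial>lborel)"
proof -
  have "(\<lambda>y. sqrt (z\<^sup>2 + y\<^sup>2)) ` {0<..} = {\<bar>z\<bar><..}"
  proof (intro equalityI subsetI)
    fix r assume "r \<in> (\<lambda>y. sqrt (z\<^sup>2 + y\<^sup>2)) ` {0<..}"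
    then show "r \<in> {\<bar>z\<bar><..}"
      by (auto intro!: real_less_rsqrt)
  next
    fix r assume r: "r \<in> {\<bar>z\<bar><..}"
    then have "z\<^sup>2 < r\<^sup>2" and "0 < r"
      using power_strict_mono[of "\<bar>z\<bar>" r 2] abs_ge_zero[of z] by auto
    then show "r \<in> (\<lambda>y. sqrt (z\<^sup>2 + y\<^sup>2)) ` {0<..}"
      by (intro image_eqI[where x = "sqrt (r\<^sup>2 - z\<^sup>2)"]) auto
  qed
  moreover have "((\<lambda>y. sqrt (z\<^sup>2 + y\<^sup>2)) has_real_derivative y / sqrt (z\<^sup>2 + y\<^sup>2)) (at y)" if "0 < y" for y
  proof -
    have "0 < z\<^sup>2 + y\<^sup>2"
      using that by (simp add: add_nonneg_pos)
    then show ?thesis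
      by (auto intro!: derivative_eq_intros simp: field_simps)
  qed
  moreover have "continuous_on {0<..} (\<lambda>y. y / sqrt (z\<^sup>2 + y\<^sup>2))"
    by (intro continuous_intros) (auto simp: add_nonneg_pos)
  ultimately show ?thesis
    using nn_integral_substitution_einterval[of "ereal 0" \<infinity> F "\<lambda>y. sqrt (z\<^sup>2 + y\<^sup>2)" "\<lambda>y. y / sqrt (z\<^sup>2 + y\<^sup>2)"]
    by simp
qed

lemma nn_integral_exp_substitution:
  fixes F :: "real \<Rightarrow> ennreal"
  assumes [measurable]: "F \<in> borel_measurable borel"
  shows "(\<integral>\<^sup>+t. ennreal (1 / t) * F (ln t) * indicator {0<..} t \<partial>lborel) = (\<integral>\<^sup>+x. F x \<partial>lborel)"
proof -
  have "ennreal (1 / exp x) * F (ln (exp x)) * ennreal (exp x) = F x" for x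
  proof -
    have "ennreal (1 / exp x) * ennreal (exp x) = 1"
      by (simp add: ennreal_mult [symmetric])
    then show ?thesis
      by (simp add: ac_simps)
  qed
  then have "(\<integral>\<^sup>+x. F x \<partial>lborel)
      = (\<integral>\<^sup>+x. ennreal (1 / exp x) * F (ln (exp x)) * ennreal (exp x) * indicator (einterval (-\<infinity>) \<infinity>) x \<partial>lborel)"
    by simp
  also have "\<dots> = (\<integral>\<^sup>+t. ennreal (1 / t) * F (ln t) * indicator (exp ` einterval (-\<infinity>) \<infinity>) t \<partial>lborel)"
    by (intro nn_integral_substitution_einterval) (auto intro!: DERIV_exp continuous_on_exp continuous_on_id)
  also have "exp ` einterval (-\<infinity>) \<infinity> = {0<..}"
  proof (intro equalityI subsetI)
    fix t :: real
    assume "t \<in> {0<..}"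
    then have "t = exp (ln t)"
      by simp
    then show "t \<in> exp ` einterval (-\<infinity>) \<infinity>"
      by simp
  qed auto
  finally show ?thesis ..
qed

section \<open>Arcsine laws\<close>

definition arcsine_pdf :: "real \<Rightarrow> ennreal" where
  "arcsine_pdf t = indicator {-1<..<1} t * ennreal (1 / (pi * sqrt (1 - t\<^sup>2)))"

definition folded_arcsine_pdf :: "real \<Rightarrow> ennreal" where
  "folded_arcsine_pdf d = indicator {0<..<1} d * ennreal (2 / (pi * sqrt (1 - d\<^sup>2)))"

lemma arcsine_pdf_measurable [measurable]: "arcsine_pdf \<in> borel_measurable borel"
  unfolding arcsine_pdf_def by measurable

lemma folded_arcsine_pdf_measurable [measurable]: "folded_arcsine_pdf \<in> borel_measurable borel"
  unfolding folded_arcsine_pdf_def by measurable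

lemma nn_integral_arcsine_pdf:
  fixes k :: "real \<Rightarrow> ennreal"
  assumes [measurable]: "k \<in> borel_measurable borel"
  shows "(\<integral>\<^sup>+t. arcsine_pdf t * k t \<partial>lborel)
       = ennreal (1 / pi) * (\<integral>\<^sup>+x. k (sin x) * indicator {-(pi/2)<..<pi/2} x \<partial>lborel)"
proof -
  have "ennreal (1 / (pi * s)) = ennreal (1 / pi) * ennreal (1 / s)" for s
    by (subst ennreal_mult' [symmetric]) auto
  then have "arcsine_pdf t = ennreal (1 / pi) * (ennreal (1 / sqrt (1 - t\<^sup>2)) * indicator {sin (-(pi/2))<..<sin (pi/2)} t)" for t
    by (simp add: arcsine_pdf_def split: split_indicator)
  then have "(\<integral>\<^sup>+t. arcsine_pdf t * k t \<partial>lborel) = ennreal (1 / pi) *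
      (\<integral>\<^sup>+t. ennreal (1 / sqrt (1 - t\<^sup>2)) * k t * indicator {sin (-(pi/2))<..<sin (pi/2)} t \<partial>lborel)"
    by (subst nn_integral_cmult [symmetric]) (auto simp: ac_simps)
  then show ?thesis
    using nn_integral_sin_substitution [of k "-(pi/2)" "pi/2"] by simp
qed

lemma nn_integral_folded_arcsine_pdf:
  fixes k :: "real \<Rightarrow> ennreal"
  assumes [measurable]: "k \<in> borel_measurable borel"
  shows "(\<integral>\<^sup>+d. folded_arcsine_pdf d * k d \<partial>lborel)
       = ennreal (2 / pi) * (\<integral>\<^sup>+x. k (sin x) * indicator {0<..<pi/2} x \<partial>lborel)"
proof -
  have "ennreal (2 / (pi * s)) = ennreal (2 / pi) * ennreal (1 / s)" for s
    by (subst ennreal_mult' [symmetric]) auto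
  then have "folded_arcsine_pdf d = ennreal (2 / pi) * (ennreal (1 / sqrt (1 - d\<^sup>2)) * indicator {sin 0<..<sin (pi/2)} d)" for d
    by (simp add: folded_arcsine_pdf_def split: split_indicator)
  then have "(\<integral>\<^sup>+d. folded_arcsine_pdf d * k d \<partial>lborel) = ennreal (2 / pi) *
      (\<integral>\<^sup>+t. ennreal (1 / sqrt (1 - t\<^sup>2)) * k t * indicator {sin 0<..<sin (pi/2)} t \<partial>lborel)"
    by (subst nn_integral_cmult [symmetric]) (auto simp: ac_simps)
  then show ?thesis
    using nn_integral_sin_substitution [of k "0" "pi/2"] by simp
qed

lemma sum_signs_rotated_sin:
  fixes k :: "real \<Rightarrow> 'b :: comm_monoid_add"
  shows "(\<Sum>u1\<in>{-1,1}. \<Sum>u2\<in>{-1,1}. k (cos \<alpha> * sin x * u1 - sin \<alpha> * cos x * u2))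
       = k (sin (x - \<alpha>)) + k (- sin (x - \<alpha>)) + (k (sin (x + \<alpha>)) + k (- sin (x + \<alpha>)))"
  by (simp add: sin_diff sin_add algebra_simps)

(* After the substitution d = sin x, the four sign patterns give the values +/- sin (x +/- alpha)
   for x in (0, pi/2); together they sweep a full period of the even, pi-periodic function
   k (sin x) + k (- sin x), so the rotation by alpha disappears. *)
lemma folded_arcsine_rotation:
  fixes k :: "real \<Rightarrow> ennreal" and \<alpha> :: real
  assumes [measurable]: "k \<in> borel_measurable borel" and \<alpha>: "0 \<le> \<alpha>" "\<alpha> \<le> pi/2"
  shows "(\<Sum>u1\<in>{-1,1}. \<Sum>u2\<in>{-1,1}. \<integral>\<^sup>+d. folded_arcsine_pdf d *
            k (cos \<alpha> * d * u1 - sin \<alpha> * sqrt (1 - d\<^sup>2) * u2) \<partial>lborel)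
       = 4 * (\<integral>\<^sup>+t. arcsine_pdf t * k t \<partial>lborel)"
proof -
  define K where "K x = k (sin x) + k (- sin x)" for x
  have [measurable]: "K \<in> borel_measurable borel"
    unfolding K_def by measurable
  define J where "J = (\<integral>\<^sup>+x. k (sin x) * indicator {-(pi/2)<..<pi/2} x \<partial>lborel)"
  define g where "g u1 u2 = (\<lambda>x. k (cos \<alpha> * sin x * u1 - sin \<alpha> * cos x * u2) * indicator {0<..<pi/2} x)"
    for u1 u2 :: real
  have g_measurable: "g u1 u2 \<in> borel_measurable borel" for u1 u2
    unfolding g_def by measurable
  have folded: "(\<integral>\<^sup>+d. folded_arcsine_pdf d * k (cos \<alpha> * d * u1 - sin \<alpha> * sqrt (1 - d\<^sup>2) * u2) \<partial>lborel)
      = ennreal (2 / pi) * integral\<^sup>N lborel (g u1 u2)" for u1 u2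
  proof -
    have "k (cos \<alpha> * sin x * u1 - sin \<alpha> * sqrt (1 - (sin x)\<^sup>2) * u2) * indicator {0<..<pi/2} x = g u1 u2 x" for x
      by (auto simp: g_def sqrt_one_minus_sin_squared split: split_indicator)
    then show ?thesis
      by (subst nn_integral_folded_arcsine_pdf) simp_all
  qed
  have four_signs: "(\<Sum>u1\<in>{-1,1}. \<Sum>u2\<in>{-1,1}. g u1 u2 x) = (K (x - \<alpha>) + K (x + \<alpha>)) * indicator {0<..<pi/2} x" for x
    unfolding g_def sum_distrib_right [symmetric] sum_signs_rotated_sin K_def ..
  have shifted: "(\<integral>\<^sup>+x. (K (x - \<alpha>) + K (x + \<alpha>)) * indicator {0<..<pi/2} x \<partial>lborel)
      = (\<integral>\<^sup>+x. K x * indicator {-(pi/2)<..<pi/2} x \<partial>lborel)"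
    using \<alpha> by (intro nn_integral_even_periodic_shifts) (auto simp: K_def add.commute)
  have K_J: "(\<integral>\<^sup>+x. K x * indicator {-(pi/2)<..<pi/2} x \<partial>lborel) = 2 * J"
    using nn_integral_add_reflection[of "\<lambda>x. k (sin x)" "pi/2"] by (simp add: K_def J_def)
  have "(\<Sum>u1\<in>{-1,1}. \<Sum>u2\<in>{-1,1}. \<integral>\<^sup>+d. folded_arcsine_pdf d *
            k (cos \<alpha> * d * u1 - sin \<alpha> * sqrt (1 - d\<^sup>2) * u2) \<partial>lborel)
      = ennreal (2 / pi) * (\<Sum>u1\<in>{-1,1}. \<Sum>u2\<in>{-1,1}. integral\<^sup>N lborel (g u1 u2))"
    by (simp only: folded sum_distrib_left)
  also have "(\<Sum>u1\<in>{-1,1}. \<Sum>u2\<in>{-1,1}. integral\<^sup>N lborel (g u1 u2))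
      = (\<integral>\<^sup>+x. (\<Sum>u1\<in>{-1,1}. \<Sum>u2\<in>{-1,1}. g u1 u2 x) \<partial>lborel)"
    using g_measurable by (simp add: nn_integral_add)
  also have "\<dots> = 2 * J"
    by (simp only: four_signs shifted K_J)
  also have "ennreal (2 / pi) * (2 * J) = 4 * (ennreal (1 / pi) * J)"
  proof -
    have "ennreal (2 / pi) * 2 = 4 * ennreal (1 / pi)"
      by (simp add: ennreal_mult'' [symmetric] ennreal_numeral [symmetric] del: ennreal_numeral)
    then show ?thesis
      by (simp add: mult.assoc [symmetric])
  qed
  finally show ?thesis
    by (simp add: nn_integral_arcsine_pdf J_def)
qed

section \<open>Radial mixtures of the arcsine law\<close>

definition radial_pdf :: "(real \<Rightarrow> real) \<Rightarrow> real \<Rightarrow> ennreal" where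
  "radial_pdf g r = indicator {0<..} r * ennreal (2 * r * g (r\<^sup>2) / (LINT u:{0..}|lborel. g u))"

(* The density of either coordinate of the bivariate law with density g (x^2 + y^2) / Zg g. *)
definition spherical_marginal_pdf :: "(real \<Rightarrow> real) \<Rightarrow> real \<Rightarrow> ennreal" where
  "spherical_marginal_pdf g z = ennreal (1 / Zg g) * (\<integral>\<^sup>+y. ennreal (g (z\<^sup>2 + y\<^sup>2)) \<partial>lborel)"

lemma density_generatorD:
  assumes "density_generator g"
  shows density_generator_measurable: "g \<in> borel_measurable borel"
    and density_generator_nonneg: "0 \<le> u \<Longrightarrow> 0 \<le> g u"
    and density_generator_integral_pos: "0 < (LINT u:{0..}|lborel. g u)"
  using assms by (auto simp: density_generator_def)

lemma Zg_pos: "density_generator g \<Longrightarrow> 0 < Zg g"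
  by (simp add: Zg_def density_generator_integral_pos)

lemma radial_pdf_measurable [measurable]:
  "density_generator g \<Longrightarrow> radial_pdf g \<in> borel_measurable borel"
  using density_generator_measurable[measurable] unfolding radial_pdf_def by measurable

lemma spherical_marginal_pdf_measurable [measurable]:
  "density_generator g \<Longrightarrow> spherical_marginal_pdf g \<in> borel_measurable borel"
  using density_generator_measurable[measurable] unfolding spherical_marginal_pdf_def by measurable

lemma radial_arcsine_kernel_at_hypot:
  fixes y z :: real
  assumes gen: "density_generator g" and "0 < y"
  defines "r \<equiv> sqrt (z\<^sup>2 + y\<^sup>2)"
  shows "radial_pdf g r * ennreal (1 / r) * arcsine_pdf (z / r) * ennreal (y / r)
       = ennreal (2 / Zg g) * ennreal (g (z\<^sup>2 + y\<^sup>2))"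
proof -
  define I where "I = (LINT u:{0..}|lborel. g u)"
  have I: "0 < I"
    using density_generator_integral_pos[OF gen] by (simp add: I_def)
  have r: "0 < r" "r\<^sup>2 = z\<^sup>2 + y\<^sup>2"
    using \<open>0 < y\<close> by (simp_all add: r_def add_nonneg_pos)
  have "\<bar>z\<bar> < r"
    using \<open>0 < y\<close> unfolding r_def by (intro real_less_rsqrt) simp
  then have z_r: "-1 < z / r" "z / r < 1"
    using r by (auto simp: field_simps abs_less_iff)
  have "1 - (z / r)\<^sup>2 = (r\<^sup>2 - z\<^sup>2) / r\<^sup>2"
    using r(1) by (simp add: field_simps)
  also have "\<dots> = (y / r)\<^sup>2"
    by (simp add: r(2) power_divide)
  finally have sq: "sqrt (1 - (z / r)\<^sup>2) = y / r"
    using r \<open>0 < y\<close> by simp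
  have "0 \<le> g (r\<^sup>2)"
    using gen by (simp add: density_generator_nonneg)
  then have "radial_pdf g r * ennreal (1 / r) * arcsine_pdf (z / r) * ennreal (y / r)
      = ennreal (2 * r * g (r\<^sup>2) / I * (1 / r) * (1 / (pi * (y / r))) * (y / r))"
    using r z_r I \<open>0 < y\<close>
    by (simp add: radial_pdf_def arcsine_pdf_def sq I_def[symmetric] ennreal_mult' [symmetric])
  also have "\<dots> = ennreal (2 / Zg g * g (z\<^sup>2 + y\<^sup>2))"
    using r \<open>0 < y\<close> by (simp add: Zg_def I_def[symmetric] field_simps)
  finally show ?thesis
    using I by (simp add: Zg_def I_def[symmetric] ennreal_mult' [symmetric])
qed

lemma radial_arcsine_kernel:
  assumes gen: "density_generator g"
  shows "(\<integral>\<^sup>+r. radial_pdf g r * ennreal (1 / r) * arcsine_pdf (z / r) \<partial>lborel) = spherical_marginal_pdf g z"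
proof -
  note [measurable] = density_generator_measurable[OF gen]
  define f where "f r = radial_pdf g r * ennreal (1 / r) * arcsine_pdf (z / r)" for r
  have [measurable]: "f \<in> borel_measurable borel"
    unfolding f_def using gen by measurable
  have support: "f r * indicator {\<bar>z\<bar><..} r = f r" for r
  proof (cases "r \<le> 0 \<or> \<bar>z\<bar> < r")
    case False
    then have "1 \<le> \<bar>z / r\<bar>"
      by (simp add: abs_div le_divide_eq)
    then have "indicator {-1<..<1} (z / r) = (0 :: ennreal)"
      by (auto split: split_indicator abs_split)
    then show ?thesis
      by (simp add: f_def arcsine_pdf_def)
  qed (auto simp: f_def radial_pdf_def)
  have "(\<integral>\<^sup>+r. f r \<partial>lborel) = (\<integral>\<^sup>+r. f r * indicator {\<bar>z\<bar><..} r \<partial>lborel)"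
    by (simp add: support)
  also have "\<dots> = (\<integral>\<^sup>+y. f (sqrt (z\<^sup>2 + y\<^sup>2)) * ennreal (y / sqrt (z\<^sup>2 + y\<^sup>2)) * indicator {0<..} y \<partial>lborel)"
    by (simp add: nn_integral_hypot_substitution)
  also have "\<dots> = (\<integral>\<^sup>+y. ennreal (2 / Zg g) * (ennreal (g (z\<^sup>2 + y\<^sup>2)) * indicator {0<..} y) \<partial>lborel)"
    by (intro nn_integral_cong) (simp add: f_def radial_arcsine_kernel_at_hypot[OF gen] split: split_indicator)
  also have "\<dots> = ennreal (2 / Zg g) * (\<integral>\<^sup>+y. ennreal (g (z\<^sup>2 + y\<^sup>2)) * indicator {0<..} y \<partial>lborel)"
    by (rule nn_integral_cmult) measurable
  also have "ennreal (2 / Zg g) = ennreal (1 / Zg g) * 2"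
    using Zg_pos[OF gen] by (simp add: ennreal_mult' [symmetric] ennreal_numeral [symmetric] del: ennreal_numeral)
  finally show ?thesis
    by (simp add: f_def spherical_marginal_pdf_def nn_integral_even [of "\<lambda>y. ennreal (g (z\<^sup>2 + y\<^sup>2))"] mult.assoc)
qed

lemma nn_integral_radial_arcsine:
  fixes h :: "real \<Rightarrow> ennreal"
  assumes gen: "density_generator g" and [measurable]: "h \<in> borel_measurable borel"
  shows "(\<integral>\<^sup>+r. radial_pdf g r * (\<integral>\<^sup>+t. arcsine_pdf t * h (r * t) \<partial>lborel) \<partial>lborel)
       = (\<integral>\<^sup>+z. spherical_marginal_pdf g z * h z \<partial>lborel)"
proof -
  note [measurable] = radial_pdf_measurable[OF gen]
  define q where "q r z = radial_pdf g r * ennreal (1 / r) * arcsine_pdf (z / r)" for r z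
  have [measurable]: "(\<lambda>(r, z). q r z) \<in> borel_measurable (lborel \<Otimes>\<^sub>M lborel)"
    unfolding q_def by measurable
  have "radial_pdf g r * (\<integral>\<^sup>+t. arcsine_pdf t * h (r * t) \<partial>lborel) = (\<integral>\<^sup>+z. q r z * h z \<partial>lborel)" for r
  proof (cases "0 < r")
    case True
    then show ?thesis
      by (simp add: nn_integral_density_rescale q_def nn_integral_cmult [symmetric] mult.assoc)
  qed (simp add: q_def radial_pdf_def)
  then have "(\<integral>\<^sup>+r. radial_pdf g r * (\<integral>\<^sup>+t. arcsine_pdf t * h (r * t) \<partial>lborel) \<partial>lborel)
      = (\<integral>\<^sup>+r. (\<integral>\<^sup>+z. q r z * h z \<partial>lborel) \<partial>lborel)"
    by simp
  also have "\<dots> = (\<integral>\<^sup>+z. (\<integral>\<^sup>+r. q r z \<partial>lborel) * h z \<partial>lborel)"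
    by (subst lborel_pair.Fubini') (simp_all add: nn_integral_multc)
  also have "\<dots> = (\<integral>\<^sup>+z. spherical_marginal_pdf g z * h z \<partial>lborel)"
    by (simp add: q_def radial_arcsine_kernel[OF gen])
  finally show ?thesis .
qed

section \<open>The unit-log-symmetric density\<close>

definition bivariate_quadratic_form :: "real \<Rightarrow> real \<Rightarrow> real \<Rightarrow> real" where
  "bivariate_quadratic_form rho x y = (x\<^sup>2 - 2 * rho * x * y + y\<^sup>2) / (1 - rho\<^sup>2)"

lemma bivariate_quadratic_form_diagonalize:
  fixes rho b c y :: real
  assumes c: "c\<^sup>2 = (1 + rho) / 2" and rho: "-1 < rho" "rho < 1"
  shows "bivariate_quadratic_form rho (c * y + b / 2) (c * y - b / 2) = y\<^sup>2 + b\<^sup>2 / (2 * (1 - rho))"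
proof -
  have "(c * y + b / 2)\<^sup>2 - 2 * rho * (c * y + b / 2) * (c * y - b / 2) + (c * y - b / 2)\<^sup>2
      = 2 * c\<^sup>2 * (1 - rho) * y\<^sup>2 + (1 + rho) * b\<^sup>2 / 2"
    by (simp add: power2_eq_square algebra_simps)
  also have "\<dots> = (1 + rho) * ((1 - rho) * y\<^sup>2 + b\<^sup>2 / 2)"
    unfolding c by (simp add: field_simps)
  finally have "(c * y + b / 2)\<^sup>2 - 2 * rho * (c * y + b / 2) * (c * y - b / 2) + (c * y - b / 2)\<^sup>2
      = (1 + rho) * ((1 - rho) * y\<^sup>2 + b\<^sup>2 / 2)" .
  moreover have "1 - rho\<^sup>2 = (1 + rho) * (1 - rho)"
    by (simp add: power2_eq_square algebra_simps)
  moreover have "(1 + rho) * ((1 - rho) * y\<^sup>2 + b\<^sup>2 / 2) / ((1 + rho) * (1 - rho)) = y\<^sup>2 + b\<^sup>2 / (2 * (1 - rho))"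
    using rho by (simp add: add_divide_distrib)
  ultimately show ?thesis
    by (simp only: bivariate_quadratic_form_def)
qed

lemma nn_integral_bivariate_quadratic_form:
  fixes g :: "real \<Rightarrow> real" and mu sig rho b :: real
  assumes [measurable]: "g \<in> borel_measurable borel" and sig: "0 < sig" and rho: "-1 < rho" "rho < 1"
  shows "(\<integral>\<^sup>+x. ennreal (g (bivariate_quadratic_form rho ((x - mu) / sig + b) ((x - mu) / sig))) \<partial>lborel)
       = ennreal (sig * sqrt ((1 + rho) / 2)) * (\<integral>\<^sup>+y. ennreal (g (y\<^sup>2 + b\<^sup>2 / (2 * (1 - rho)))) \<partial>lborel)"
proof -
  define c where "c = sqrt ((1 + rho) / 2)"
  have c: "0 < c" "c\<^sup>2 = (1 + rho) / 2"
    using rho by (simp_all add: c_def)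
  have "(mu - sig * b / 2 + sig * c * y - mu) / sig = c * y - b / 2" for y
    using sig by (simp add: field_simps)
  moreover have "c * y - b / 2 + b = c * y + b / 2" for y
    by simp
  ultimately have "bivariate_quadratic_form rho ((mu - sig * b / 2 + sig * c * y - mu) / sig + b)
      ((mu - sig * b / 2 + sig * c * y - mu) / sig) = y\<^sup>2 + b\<^sup>2 / (2 * (1 - rho))" for y
    using bivariate_quadratic_form_diagonalize[OF c(2) rho] by (simp only:)
  then show ?thesis
    using sig c unfolding c_def [symmetric] bivariate_quadratic_form_def
    by (subst nn_integral_real_affine[where c = "sig * c" and t = "mu - sig * b / 2"]) simp_all
qed

lemma uls_normalizing_constant:
  assumes sig: "0 < sig" and rho: "-1 < rho" "rho < 1" and w: "0 < w" "w < 1" and "0 < Z"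
  shows "ennreal (1 / (w * (1 - w) * sig\<^sup>2 * sqrt (1 - rho\<^sup>2) * Z)) * ennreal (sig * sqrt ((1 + rho) / 2))
       = ennreal (1 / Z) * ennreal (1 / (sig * sqrt (2 * (1 - rho)) * w * (1 - w)))"
proof -
  define c where "c = sqrt ((1 + rho) / 2)"
  have "sqrt (1 - rho\<^sup>2) = c * sqrt (2 * (1 - rho))"
    unfolding c_def real_sqrt_mult [symmetric] by (simp add: power2_eq_square field_simps)
  moreover have "0 < c" "0 < sqrt (2 * (1 - rho))" "0 < 1 - w"
    using rho w by (simp_all add: c_def)
  ultimately have "1 / (w * (1 - w) * sig\<^sup>2 * sqrt (1 - rho\<^sup>2) * Z) * (sig * c)
      = 1 / Z * (1 / (sig * sqrt (2 * (1 - rho)) * w * (1 - w)))"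
    using sig w \<open>0 < Z\<close> by (simp add: power2_eq_square field_simps)
  then show ?thesis
    using sig \<open>0 < c\<close> \<open>0 < Z\<close> unfolding c_def [symmetric]
    by (simp add: ennreal_mult'' [symmetric] ennreal_mult' [symmetric] del: times_divide_eq_left times_divide_eq_right)
qed

lemma uls_pdf_eq_at:
  fixes g :: "real \<Rightarrow> real" and mu sig rho w :: real
  defines "sr \<equiv> sig * sqrt (2 * (1 - rho))"
  assumes gen: "density_generator g" and sig: "0 < sig" and rho: "-1 < rho" "rho < 1"
    and w: "0 < w" "w < 1"
  shows "uls_pdf mu sig rho g w = spherical_marginal_pdf g (A_map sr w) * ennreal (1 / (sr * w * (1 - w)))"
proof -
  note [measurable] = density_generator_measurable[OF gen]
  define b where "b = ln (w / (1 - w)) / sig"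
  define c where "c = sqrt ((1 + rho) / 2)"
  define G where "G x = ennreal (g (bivariate_quadratic_form rho ((x - mu) / sig + b) ((x - mu) / sig)))" for x
  define J where "J = (\<integral>\<^sup>+y. ennreal (g ((A_map sr w)\<^sup>2 + y\<^sup>2)) \<partial>lborel)"
  have G_measurable: "G \<in> borel_measurable borel"
    unfolding G_def bivariate_quadratic_form_def by measurable
  have "indicator {0<..} t * ennreal ((1 / t) *
          (let eta = exp mu; tw = w / (1 - w) * t; ttw = (1 / sig) * ln (tw / eta); tt = (1 / sig) * ln (t / eta)
           in g ((ttw\<^sup>2 - 2 * rho * ttw * tt + tt\<^sup>2) / (1 - rho\<^sup>2))))
      = ennreal (1 / t) * G (ln t) * indicator {0<..} t" for t
  proof (cases "0 < t")
    case True
    then have "ln (w / (1 - w) * t / exp mu) = ln (w / (1 - w)) + (ln t - mu)"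
      using w by (simp add: ln_div ln_mult)
    then have ttw: "(1 / sig) * ln (w / (1 - w) * t / exp mu) = (ln t - mu) / sig + b"
      unfolding b_def using sig by (simp only:) (simp add: field_simps)
    have tt: "(1 / sig) * ln (t / exp mu) = (ln t - mu) / sig"
      using True by (simp add: ln_div)
    show ?thesis
      using True unfolding Let_def ttw tt
      by (simp add: G_def bivariate_quadratic_form_def ennreal_mult' [symmetric] mult.commute)
  qed simp
  then have "uls_pdf mu sig rho g w = ennreal (1 / (w * (1 - w) * sig\<^sup>2 * sqrt (1 - rho\<^sup>2) * Zg g))
      * (\<integral>\<^sup>+t. ennreal (1 / t) * G (ln t) * indicator {0<..} t \<partial>lborel)"
    using w by (simp add: uls_pdf_def)
  also have "(\<integral>\<^sup>+t. ennreal (1 / t) * G (ln t) * indicator {0<..} t \<partial>lborel) = ennreal (sig * c) * J"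
  proof -
    have "(A_map sr w)\<^sup>2 = b\<^sup>2 / (2 * (1 - rho))"
      using sig rho by (simp add: A_map_def sr_def b_def power_divide power_mult_distrib)
    then show ?thesis
      using nn_integral_exp_substitution[OF G_measurable] nn_integral_bivariate_quadratic_form[of g sig rho mu b] sig rho
      by (simp add: G_def J_def c_def add.commute)
  qed
  also have "ennreal (1 / (w * (1 - w) * sig\<^sup>2 * sqrt (1 - rho\<^sup>2) * Zg g)) * (ennreal (sig * c) * J)
      = ennreal (1 / Zg g) * J * ennreal (1 / (sr * w * (1 - w)))"
    unfolding sr_def c_def
    by (subst mult.assoc [symmetric], subst uls_normalizing_constant[OF sig rho w Zg_pos[OF gen]]) (simp only: ac_simps)
  finally show ?thesis
    by (simp add: spherical_marginal_pdf_def J_def)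
qed

lemma uls_pdf_eq:
  fixes g :: "real \<Rightarrow> real" and mu sig rho :: real
  defines "sr \<equiv> sig * sqrt (2 * (1 - rho))"
  assumes gen: "density_generator g" and sig: "0 < sig" and rho: "-1 < rho" "rho < 1"
  shows "uls_pdf mu sig rho g
       = (\<lambda>w. spherical_marginal_pdf g (A_map sr w) * ennreal (1 / (sr * w * (1 - w))) * indicator {0<..<1} w)"
proof
  fix w
  show "uls_pdf mu sig rho g w
      = spherical_marginal_pdf g (A_map sr w) * ennreal (1 / (sr * w * (1 - w))) * indicator {0<..<1} w"
    using uls_pdf_eq_at[OF gen sig rho, of w mu] by (cases "0 < w \<and> w < 1") (auto simp: sr_def uls_pdf_def)
qed

lemma A_map_measurable [measurable]: "A_map s \<in> borel_measurable borel"
  unfolding A_map_def by measurable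

lemma A_inv_measurable [measurable]: "A_inv s \<in> borel_measurable borel"
  unfolding A_inv_def by measurable

lemma A_map_A_inv:
  assumes "0 < s"
  shows "A_map s (A_inv s z) = z"
proof -
  have pos: "0 < 1 + exp (s * z)"
    by (simp add: add_pos_pos)
  have "A_inv s z = exp (s * z) / (1 + exp (s * z))"
    by (simp add: A_inv_def exp_minus field_simps)
  then have "A_inv s z / (1 - A_inv s z) = exp (s * z)"
    using pos by (simp only:) (simp add: field_simps)
  then show ?thesis
    using assms by (simp add: A_map_def)
qed

lemma A_inv_A_map:
  assumes "0 < s" "0 < w" "w < 1"
  shows "A_inv s (A_map s w) = w"
proof -
  have "exp (- s * A_map s w) = (1 - w) / w"
    using assms by (simp add: A_map_def exp_minus ln_div exp_diff)
  then show ?thesis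
    unfolding A_inv_def using assms by (simp only:) (simp add: field_simps)
qed

lemma A_inv_in_unit_interval: "A_inv s z \<in> {0<..<1}"
  by (simp add: A_inv_def add_pos_pos)

lemma nn_integral_logit_substitution:
  fixes F :: "real \<Rightarrow> ennreal"
  assumes s: "0 < s" and [measurable]: "F \<in> borel_measurable borel"
  shows "(\<integral>\<^sup>+z. F z \<partial>lborel)
       = (\<integral>\<^sup>+w. F (A_map s w) * ennreal (1 / (s * w * (1 - w))) * indicator {0<..<1} w \<partial>lborel)"
proof -
  have unit_interval: "einterval 0 1 = {0<..<1 :: real}"
    by (auto simp: einterval_def)
  have "A_map s ` {0<..<1} = UNIV"
  proof (intro equalityI subsetI)
    fix z :: real
    show "z \<in> A_map s ` {0<..<1}"
      using A_inv_in_unit_interval A_map_A_inv[OF s] by (metis image_eqI)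
  qed simp
  moreover have "(\<integral>\<^sup>+w. F (A_map s w) * ennreal (1 / (s * w * (1 - w))) * indicator (einterval 0 1) w \<partial>lborel)
    = (\<integral>\<^sup>+z. F z * indicator (A_map s ` einterval 0 1) z \<partial>lborel)"
  proof (rule nn_integral_substitution_einterval)
    show "(A_map s has_real_derivative 1 / (s * w * (1 - w))) (at w)" if "w \<in> einterval 0 1" for w
      using that s unfolding unit_interval A_map_def
      by (auto intro!: derivative_eq_intros simp: divide_simps power2_eq_square)
    show "continuous_on (einterval 0 1) (\<lambda>w. 1 / (s * w * (1 - w)))"
      using s unfolding unit_interval by (intro continuous_intros) auto
    show "0 \<le> 1 / (s * w * (1 - w))" if "w \<in> einterval 0 1" for w
      using that s by (simp add: unit_interval)
  qed (simp_all, measurable)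
  ultimately show ?thesis
    by (simp add: unit_interval)
qed

lemma distributed_lborelI:
  fixes X :: "'a \<Rightarrow> real" and f :: "real \<Rightarrow> ennreal"
  assumes [measurable]: "X \<in> borel_measurable M" "f \<in> borel_measurable borel"
    and nn_integral: "\<And>h. h \<in> borel_measurable borel \<Longrightarrow> (\<integral>\<^sup>+\<omega>. h (X \<omega>) \<partial>M) = (\<integral>\<^sup>+x. f x * h x \<partial>lborel)"
  shows "distributed M lborel X f"
proof -
  have "distr M lborel X = density lborel f"
  proof (rule measure_eqI)
    fix A
    assume "A \<in> sets (distr M lborel X)"
    then have [measurable]: "A \<in> sets borel"
      by simp
    have "emeasure (distr M lborel X) A = (\<integral>\<^sup>+x. indicator A x \<partial>distr M lborel X)"
      by (rule nn_integral_indicator [symmetric]) simp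
    also have "\<dots> = (\<integral>\<^sup>+\<omega>. indicator A (X \<omega>) \<partial>M)"
      by (rule nn_integral_distr) measurable
    also have "\<dots> = (\<integral>\<^sup>+x. f x * indicator A x \<partial>lborel)"
      by (rule nn_integral) measurable
    also have "\<dots> = emeasure (density lborel f) A"
      by (rule emeasure_density [symmetric]) simp_all
    finally show "emeasure (distr M lborel X) A = emeasure (density lborel f) A" .
  qed simp
  then show ?thesis
    by (simp add: distributed_def)
qed

lemma distributed_A_inv:
  fixes Z :: "'a \<Rightarrow> real" and f :: "real \<Rightarrow> ennreal"
  assumes s: "0 < s" and Z: "distributed M lborel Z f"
  shows "distributed M lborel (\<lambda>\<omega>. A_inv s (Z \<omega>))
           (\<lambda>w. f (A_map s w) * ennreal (1 / (s * w * (1 - w))) * indicator {0<..<1} w)"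
proof (rule distributed_lborelI)
  have [measurable]: "Z \<in> borel_measurable M" "f \<in> borel_measurable borel"
    using Z by (simp_all add: distributed_def)
  show "(\<lambda>\<omega>. A_inv s (Z \<omega>)) \<in> borel_measurable M"
    by measurable
  show "(\<lambda>w. f (A_map s w) * ennreal (1 / (s * w * (1 - w))) * indicator {0<..<1} w) \<in> borel_measurable borel"
    by measurable
  fix h :: "real \<Rightarrow> ennreal"
  assume [measurable]: "h \<in> borel_measurable borel"
  have "(\<integral>\<^sup>+\<omega>. h (A_inv s (Z \<omega>)) \<partial>M) = (\<integral>\<^sup>+z. f z * h (A_inv s z) \<partial>lborel)"
    using Z by (simp add: distributed_nn_integral)
  also have "\<dots> = (\<integral>\<^sup>+w. f (A_map s w) * h (A_inv s (A_map s w)) * ennreal (1 / (s * w * (1 - w)))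
      * indicator {0<..<1} w \<partial>lborel)"
    using s by (rule nn_integral_logit_substitution) measurable
  also have "\<dots> = (\<integral>\<^sup>+w. f (A_map s w) * ennreal (1 / (s * w * (1 - w))) * indicator {0<..<1} w * h w \<partial>lborel)"
    using s by (intro nn_integral_cong) (auto simp: A_inv_A_map mult_ac split: split_indicator)
  finally show "(\<integral>\<^sup>+\<omega>. h (A_inv s (Z \<omega>)) \<partial>M) = \<dots>" .
qed

lemma distr_distributed_comp:
  fixes W :: "'b \<Rightarrow> real" and X :: "'a \<Rightarrow> real"
  assumes W: "distributed N lborel W f" and X: "distributed M lborel X f"
    and [measurable]: "\<phi> \<in> borel_measurable borel"
  shows "distr N lborel (\<lambda>x. \<phi> (W x)) = distr M lborel (\<lambda>x. \<phi> (X x))"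
proof -
  have "distr N lborel (\<lambda>x. \<phi> (W x)) = distr (distr N lborel W) lborel \<phi>"
    using W by (subst distr_distr) (auto simp: distributed_def comp_def)
  also have "\<dots> = distr (distr M lborel X) lborel \<phi>"
    using W X by (simp add: distributed_distr_eq_density)
  also have "\<dots> = distr M lborel (\<lambda>x. \<phi> (X x))"
    using X by (subst distr_distr) (auto simp: distributed_def comp_def)
  finally show ?thesis .
qed

section \<open>Independent random signs, radius and angle\<close>

lemma nn_integral_distr_random_sign:
  fixes U :: "'a \<Rightarrow> real" and \<phi> :: "real \<Rightarrow> ennreal"
  assumes "prob_space M" and [measurable]: "U \<in> borel_measurable M"
    and minus: "measure M {\<omega>\<in>space M. U \<omega> = -1} = 1/2" and plus: "measure M {\<omega>\<in>space M. U \<omega> = 1} = 1/2"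
  shows "(\<integral>\<^sup>+u. \<phi> u \<partial>distr M borel U) = ennreal (1/2) * (\<Sum>u\<in>{-1,1}. \<phi> u)"
proof -
  interpret prob_space M by fact
  interpret D: prob_space "distr M borel U"
    by (rule prob_space_distr) simp
  have point: "emeasure (distr M borel U) {u} = ennreal (1/2)" if u: "u \<in> {-1, 1}" for u
  proof -
    consider "u = -1" | "u = 1"
      using u by blast
    moreover have "U -` {u} \<inter> space M = {\<omega>\<in>space M. U \<omega> = u}"
      by auto
    then have "emeasure (distr M borel U) {u} = emeasure M {\<omega>\<in>space M. U \<omega> = u}"
      by (simp add: emeasure_distr)
    ultimately show ?thesis
      by cases (simp_all only: emeasure_eq_measure minus plus)
  qed
  have "emeasure (distr M borel U) {-1, 1} = emeasure (distr M borel U) {-1} + emeasure (distr M borel U) {1}"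
    by (subst emeasure_eq_sum_singleton) simp_all
  also have "\<dots> = ennreal (1/2 + 1/2)"
    by (simp only: point insert_iff simp_thms ennreal_plus)
  finally have support: "emeasure (distr M borel U) {-1, 1} = 1"
    by simp
  have "{u \<in> space (distr M borel U). u \<in> {-1, 1}} = {-1, 1}"
    by auto
  then have "AE u in distr M borel U. u \<in> {-1, 1}"
    using support by (intro D.AE_I_eq_1) simp_all
  then have "(\<integral>\<^sup>+u. \<phi> u \<partial>distr M borel U)
      = (\<integral>\<^sup>+u. \<phi> (-1) * indicator {-1} u + \<phi> 1 * indicator {1} u \<partial>distr M borel U)"
    by (intro nn_integral_cong_AE) (auto elim!: eventually_mono)
  also have "\<dots> = \<phi> (-1) * emeasure (distr M borel U) {-1} + \<phi> 1 * emeasure (distr M borel U) {1}"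
    by (subst nn_integral_add) (simp_all add: nn_integral_cmult_indicator)
  finally show ?thesis
    by (simp add: point distrib_left mult.commute)
qed

lemma measurable_compose_4:
  fixes H :: "real \<Rightarrow> real \<Rightarrow> real \<Rightarrow> real \<Rightarrow> ennreal"
  assumes H: "(\<lambda>(a, b, c, d). H a b c d) \<in> borel_measurable borel"
    and [measurable]: "f0 \<in> borel_measurable K" "f1 \<in> borel_measurable K" "f2 \<in> borel_measurable K"
      "f3 \<in> borel_measurable K"
  shows "(\<lambda>x. H (f0 x) (f1 x) (f2 x) (f3 x)) \<in> borel_measurable K"
proof -
  have "(\<lambda>x. (f0 x, f1 x, f2 x, f3 x)) \<in> borel_measurable K"
    unfolding borel_prod [symmetric] by measurable
  from measurable_compose[OF this H] show ?thesis
    by simp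
qed

lemma nn_integral_PiM_4:
  fixes N :: "nat \<Rightarrow> real measure" and H :: "real \<Rightarrow> real \<Rightarrow> real \<Rightarrow> real \<Rightarrow> ennreal"
  assumes "\<And>i. sigma_finite_measure (N i)" and sets_N [simp]: "\<And>i. sets (N i) = sets borel"
    and H_measurable: "(\<lambda>(a, b, c, d). H a b c d) \<in> borel_measurable borel"
  shows "(\<integral>\<^sup>+x. H (x 0) (x 1) (x 2) (x 3) \<partial>PiM {0,1,2,3} N) =
    (\<integral>\<^sup>+y0. (\<integral>\<^sup>+y1. (\<integral>\<^sup>+y2. (\<integral>\<^sup>+y3. H y0 y1 y2 y3 \<partial>N 3) \<partial>N 2) \<partial>N 1) \<partial>N 0)"
proof -
  interpret P: product_sigma_finite N
    unfolding product_sigma_finite_def using assms(1) by blast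
  note [measurable] = measurable_compose_4[OF H_measurable]
  have "measurable (PiM I N) (N i) = measurable (PiM I N) borel" for I i
    by (rule measurable_cong_sets) simp_all
  then have [measurable]: "(\<lambda>x. x i) \<in> borel_measurable (PiM I N)" if "i \<in> I" for i I
    using measurable_component_singleton[OF that, of N] by simp
  have measurable_N: "measurable (N i) borel = measurable borel (borel :: ennreal measure)" for i
    by (rule measurable_cong_sets) simp_all
  have "(\<integral>\<^sup>+x. H (x 0) (x 1) (x 2) (x 3) \<partial>PiM (insert 0 {1,2,3}) N)
      = (\<integral>\<^sup>+y0. (\<integral>\<^sup>+x. H y0 (x 1) (x 2) (x 3) \<partial>PiM (insert 1 {2,3}) N) \<partial>N 0)"
    by (subst P.product_nn_integral_insert_rev) (simp_all, measurable)
  also have "\<dots> = (\<integral>\<^sup>+y0. (\<integral>\<^sup>+y1. (\<integral>\<^sup>+x. H y0 y1 (x 2) (x 3) \<partial>PiM (insert 2 {3}) N) \<partial>N 1) \<partial>N 0)"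
    by (intro nn_integral_cong, subst P.product_nn_integral_insert_rev) (simp_all, measurable)
  also have "\<dots> = (\<integral>\<^sup>+y0. (\<integral>\<^sup>+y1. (\<integral>\<^sup>+y2. (\<integral>\<^sup>+x. H y0 y1 y2 (x 3) \<partial>PiM {3} N) \<partial>N 2) \<partial>N 1) \<partial>N 0)"
    by (intro nn_integral_cong, subst P.product_nn_integral_insert_rev) (simp_all, measurable)
  also have "\<dots> = (\<integral>\<^sup>+y0. (\<integral>\<^sup>+y1. (\<integral>\<^sup>+y2. (\<integral>\<^sup>+y3. H y0 y1 y2 y3 \<partial>N 3) \<partial>N 2) \<partial>N 1) \<partial>N 0)"
  proof (intro nn_integral_cong P.product_nn_integral_singleton)
    show "(\<lambda>y. H y0 y1 y2 y) \<in> borel_measurable (N 3)" for y0 y1 y2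
      unfolding measurable_N by measurable
  qed
  finally show ?thesis
    by simp
qed

lemma nn_integral_indep_vars4:
  fixes X :: "nat \<Rightarrow> 'a \<Rightarrow> real" and H :: "real \<Rightarrow> real \<Rightarrow> real \<Rightarrow> real \<Rightarrow> ennreal"
  assumes "prob_space M"
    and indep: "prob_space.indep_vars M (\<lambda>_. borel) X {0, 1, 2, 3}"
    and [measurable]: "\<And>i. X i \<in> borel_measurable M"
    and H_measurable: "(\<lambda>(a, b, c, d). H a b c d) \<in> borel_measurable borel"
  shows "(\<integral>\<^sup>+\<omega>. H (X 0 \<omega>) (X 1 \<omega>) (X 2 \<omega>) (X 3 \<omega>) \<partial>M) =
    (\<integral>\<^sup>+y0. (\<integral>\<^sup>+y1. (\<integral>\<^sup>+y2. (\<integral>\<^sup>+y3. H y0 y1 y2 y3 \<partial>distr M borel (X 3)) \<partial>distr M borel (X 2))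
       \<partial>distr M borel (X 1)) \<partial>distr M borel (X 0))" (is "_ = ?rhs")
proof -
  interpret prob_space M by fact
  note [measurable] = measurable_compose_4[OF H_measurable]
  have [measurable]: "(\<lambda>x. x i) \<in> borel_measurable (PiM I (\<lambda>_. borel :: real measure))" if "i \<in> I"
    for i :: nat and I
    using measurable_component_singleton[OF that] .
  have joint: "distr M (\<Pi>\<^sub>M i\<in>{0,1,2,3}. borel) (\<lambda>x. \<lambda>i\<in>{0,1,2,3}. X i x)
      = (\<Pi>\<^sub>M i\<in>{0,1,2,3}. distr M borel (X i))"
    using indep by (subst (asm) indep_vars_iff_distr_eq_PiM) auto
  have "(\<integral>\<^sup>+\<omega>. H (X 0 \<omega>) (X 1 \<omega>) (X 2 \<omega>) (X 3 \<omega>) \<partial>M)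
      = (\<integral>\<^sup>+x. H (x 0) (x 1) (x 2) (x 3) \<partial>(\<Pi>\<^sub>M i\<in>{0,1,2,3}. distr M borel (X i)))"
    unfolding joint [symmetric] by (subst nn_integral_distr) (simp_all, measurable)
  also have "\<dots> = ?rhs"
    by (intro nn_integral_PiM_4 H_measurable prob_space_imp_sigma_finite prob_space_distr) simp_all
  finally show ?thesis .
qed

lemma nn_integral_distr_distributed:
  fixes X :: "'a \<Rightarrow> real" and \<phi> :: "real \<Rightarrow> ennreal"
  assumes X: "distributed M lborel X p" and [measurable]: "\<phi> \<in> borel_measurable borel"
  shows "(\<integral>\<^sup>+y. \<phi> y \<partial>distr M borel X) = (\<integral>\<^sup>+y. p y * \<phi> y \<partial>lborel)"
proof -
  have [measurable]: "X \<in> borel_measurable M"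
    using X by (simp add: distributed_def)
  show ?thesis
    using X by (simp add: nn_integral_distr distributed_nn_integral)
qed

lemma nn_integral_signs_and_densities:
  fixes M :: "'a measure" and U1 U2 R D :: "'a \<Rightarrow> real" and H :: "real \<Rightarrow> real \<Rightarrow> real \<Rightarrow> real \<Rightarrow> ennreal"
  assumes M: "prob_space M"
    and indep: "prob_space.indep_vars M (\<lambda>_. borel)
                  (\<lambda>i::nat. if i = 0 then U1 else if i = 1 then U2 else if i = 2 then R else D)
                  {0, 1, 2, 3}"
    and U1: "U1 \<in> borel_measurable M" "measure M {\<omega>\<in>space M. U1 \<omega> = -1} = 1/2"
            "measure M {\<omega>\<in>space M. U1 \<omega> = 1} = 1/2"
    and U2: "U2 \<in> borel_measurable M" "measure M {\<omega>\<in>space M. U2 \<omega> = -1} = 1/2"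
            "measure M {\<omega>\<in>space M. U2 \<omega> = 1} = 1/2"
    and R: "distributed M lborel R pR" and D: "distributed M lborel D pD"
    and H: "(\<lambda>(a, b, c, d). H a b c d) \<in> borel_measurable borel"
  shows "(\<integral>\<^sup>+\<omega>. H (U1 \<omega>) (U2 \<omega>) (R \<omega>) (D \<omega>) \<partial>M)
       = ennreal (1/4) * (\<Sum>u1\<in>{-1,1}. \<Sum>u2\<in>{-1,1}. \<integral>\<^sup>+r. pR r * (\<integral>\<^sup>+d. pD d * H u1 u2 r d \<partial>lborel) \<partial>lborel)"
proof -
  note [measurable] = measurable_compose_4[OF H] distributed_borel_measurable[OF R] distributed_borel_measurable[OF D]
  have rv: "R \<in> borel_measurable M" "D \<in> borel_measurable M"
    using R D by (simp_all add: distributed_def)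
  have "(\<integral>\<^sup>+\<omega>. H (U1 \<omega>) (U2 \<omega>) (R \<omega>) (D \<omega>) \<partial>M)
      = (\<integral>\<^sup>+u1. (\<integral>\<^sup>+u2. (\<integral>\<^sup>+r. (\<integral>\<^sup>+d. H u1 u2 r d \<partial>distr M borel D) \<partial>distr M borel R)
          \<partial>distr M borel U2) \<partial>distr M borel U1)"
    using nn_integral_indep_vars4[OF M indep _ H] U1 U2 rv by simp
  also have "\<dots> = (\<integral>\<^sup>+u1. (\<integral>\<^sup>+u2. (\<integral>\<^sup>+r. pR r * (\<integral>\<^sup>+d. pD d * H u1 u2 r d \<partial>lborel) \<partial>lborel)
          \<partial>distr M borel U2) \<partial>distr M borel U1)"
    by (simp add: nn_integral_distr_distributed[OF D] nn_integral_distr_distributed[OF R])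
  also have "\<dots> = ennreal (1/4) * (\<Sum>u1\<in>{-1,1}. \<Sum>u2\<in>{-1,1}. \<integral>\<^sup>+r. pR r * (\<integral>\<^sup>+d. pD d * H u1 u2 r d \<partial>lborel) \<partial>lborel)"
  proof -
    have "ennreal (1/2) * ennreal (1/2) = ennreal (1/4)"
      using ennreal_mult [of "1/2" "1/2"] by simp
    then show ?thesis
      by (simp only: nn_integral_distr_random_sign[OF M U1] nn_integral_distr_random_sign[OF M U2]
          sum_distrib_left mult.assoc [symmetric])
  qed
  finally show ?thesis .
qed

lemma distributed_radial_rotation:
  fixes M :: "'a measure" and U1 U2 R D :: "'a \<Rightarrow> real" and \<alpha> :: real
  assumes gen: "density_generator g" and M: "prob_space M"
    and indep: "prob_space.indep_vars M (\<lambda>_. borel)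
                  (\<lambda>i::nat. if i = 0 then U1 else if i = 1 then U2 else if i = 2 then R else D)
                  {0, 1, 2, 3}"
    and U1: "U1 \<in> borel_measurable M" "measure M {\<omega>\<in>space M. U1 \<omega> = -1} = 1/2"
            "measure M {\<omega>\<in>space M. U1 \<omega> = 1} = 1/2"
    and U2: "U2 \<in> borel_measurable M" "measure M {\<omega>\<in>space M. U2 \<omega> = -1} = 1/2"
            "measure M {\<omega>\<in>space M. U2 \<omega> = 1} = 1/2"
    and D: "distributed M lborel D folded_arcsine_pdf"
    and R: "distributed M lborel R (radial_pdf g)"
    and \<alpha>: "0 \<le> \<alpha>" "\<alpha> \<le> pi/2"
  shows "distributed M lborel (\<lambda>\<omega>. R \<omega> * (cos \<alpha> * D \<omega> * U1 \<omega> - sin \<alpha> * sqrt (1 - (D \<omega>)\<^sup>2) * U2 \<omega>))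
           (spherical_marginal_pdf g)"
proof (rule distributed_lborelI)
  note [measurable] = radial_pdf_measurable[OF gen] spherical_marginal_pdf_measurable[OF gen]
  have [measurable]: "U1 \<in> borel_measurable M" "U2 \<in> borel_measurable M" "R \<in> borel_measurable M"
    "D \<in> borel_measurable M"
    using U1 U2 R D by (simp_all add: distributed_def)
  show "(\<lambda>\<omega>. R \<omega> * (cos \<alpha> * D \<omega> * U1 \<omega> - sin \<alpha> * sqrt (1 - (D \<omega>)\<^sup>2) * U2 \<omega>)) \<in> borel_measurable M"
    by measurable
  show "spherical_marginal_pdf g \<in> borel_measurable borel"
    by measurable
  fix h :: "real \<Rightarrow> ennreal"
  assume [measurable]: "h \<in> borel_measurable borel"
  define Y where "Y u1 u2 r = (\<integral>\<^sup>+d. folded_arcsine_pdf d * h (r * (cos \<alpha> * d * u1 - sin \<alpha> * sqrt (1 - d\<^sup>2) * u2)) \<partial>lborel)"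
    for u1 u2 r
  have H: "(\<lambda>(u1, u2, r, d). h (r * (cos \<alpha> * d * u1 - sin \<alpha> * sqrt (1 - d\<^sup>2) * u2))) \<in> borel_measurable borel"
    unfolding borel_prod [symmetric] by measurable
  have "(\<integral>\<^sup>+\<omega>. h (R \<omega> * (cos \<alpha> * D \<omega> * U1 \<omega> - sin \<alpha> * sqrt (1 - (D \<omega>)\<^sup>2) * U2 \<omega>)) \<partial>M)
      = ennreal (1/4) * (\<Sum>u1\<in>{-1,1}. \<Sum>u2\<in>{-1,1}. \<integral>\<^sup>+r. radial_pdf g r * Y u1 u2 r \<partial>lborel)"
    unfolding Y_def by (rule nn_integral_signs_and_densities[OF M indep U1 U2 R D H])
  also have "\<dots> = ennreal (1/4) * (\<integral>\<^sup>+r. radial_pdf g r * (\<Sum>u1\<in>{-1,1}. \<Sum>u2\<in>{-1,1}. Y u1 u2 r) \<partial>lborel)"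
  proof -
    have "(\<lambda>r. radial_pdf g r * Y u1 u2 r) \<in> borel_measurable borel" for u1 u2
      unfolding Y_def by measurable
    then show ?thesis
      by (simp add: distrib_left nn_integral_add add.assoc)
  qed
  also have "\<dots> = (\<integral>\<^sup>+r. radial_pdf g r * (\<integral>\<^sup>+t. arcsine_pdf t * h (r * t) \<partial>lborel) \<partial>lborel)"
  proof -
    have "(\<Sum>u1\<in>{-1,1}. \<Sum>u2\<in>{-1,1}. Y u1 u2 r) = 4 * (\<integral>\<^sup>+t. arcsine_pdf t * h (r * t) \<partial>lborel)" for r
      unfolding Y_def using \<alpha> by (intro folded_arcsine_rotation[of "\<lambda>t. h (r * t)" \<alpha>]) simp_all
    then have "(\<integral>\<^sup>+r. radial_pdf g r * (\<Sum>u1\<in>{-1,1}. \<Sum>u2\<in>{-1,1}. Y u1 u2 r) \<partial>lborel)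
        = (\<integral>\<^sup>+r. 4 * (radial_pdf g r * (\<integral>\<^sup>+t. arcsine_pdf t * h (r * t) \<partial>lborel)) \<partial>lborel)"
      by (simp only: mult.left_commute [of _ 4])
    also have "\<dots> = 4 * (\<integral>\<^sup>+r. radial_pdf g r * (\<integral>\<^sup>+t. arcsine_pdf t * h (r * t) \<partial>lborel) \<partial>lborel)"
      by (rule nn_integral_cmult) measurable
    moreover have "ennreal (1/4) * 4 = 1"
      by (simp add: ennreal_numeral [symmetric] ennreal_mult [symmetric] del: ennreal_numeral)
    ultimately show ?thesis
      by (simp add: mult.assoc [symmetric])
  qed
  also have "\<dots> = (\<integral>\<^sup>+z. spherical_marginal_pdf g z * h z \<partial>lborel)"
    by (rule nn_integral_radial_arcsine[OF gen]) measurable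
  finally show "(\<integral>\<^sup>+\<omega>. h (R \<omega> * (cos \<alpha> * D \<omega> * U1 \<omega> - sin \<alpha> * sqrt (1 - (D \<omega>)\<^sup>2) * U2 \<omega>)) \<partial>M) = \<dots>" .
qed

lemma correlation_angle:
  fixes rho :: real
  assumes "-1 < rho" "rho < 1"
  obtains \<alpha> where "0 \<le> \<alpha>" "\<alpha> \<le> pi/2"
    "cos \<alpha> = (1 - rho) / sqrt (2 * (1 - rho))" "sin \<alpha> = sqrt (1 - rho\<^sup>2) / sqrt (2 * (1 - rho))"
proof -
  have "0 < 1 - rho" "0 \<le> 1 - rho\<^sup>2"
    using assms by (simp_all add: abs_square_le_1)
  then have "((1 - rho) / sqrt (2 * (1 - rho)))\<^sup>2 + (sqrt (1 - rho\<^sup>2) / sqrt (2 * (1 - rho)))\<^sup>2 = 1"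
    by (simp add: field_simps power2_eq_square)
  moreover have "0 \<le> (1 - rho) / sqrt (2 * (1 - rho))" "0 \<le> sqrt (1 - rho\<^sup>2) / sqrt (2 * (1 - rho))"
    using \<open>0 < 1 - rho\<close> \<open>0 \<le> 1 - rho\<^sup>2\<close> by simp_all
  ultimately show ?thesis
    using sincos_total_pi_half that by metis
qed

theorem proposition2:
  fixes M :: "'a measure" and g :: "real \<Rightarrow> real" and mu sig rho :: real
    and U1 U2 R D :: "'a \<Rightarrow> real"
  assumes gen: "density_generator g"
    and sig: "sig > 0" and rho: "-1 < rho" "rho < 1"
    and M: "prob_space M"
    and indep: "prob_space.indep_vars M (\<lambda>_. borel)
                  (\<lambda>i::nat. if i = 0 then U1 else if i = 1 then U2 else if i = 2 then R else D)
                  {0, 1, 2, 3}"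
    and U1: "U1 \<in> borel_measurable M" "measure M {\<omega>\<in>space M. U1 \<omega> = -1} = 1/2"
            "measure M {\<omega>\<in>space M. U1 \<omega> = 1} = 1/2"
    and U2: "U2 \<in> borel_measurable M" "measure M {\<omega>\<in>space M. U2 \<omega> = -1} = 1/2"
            "measure M {\<omega>\<in>space M. U2 \<omega> = 1} = 1/2"
    and D: "distributed M lborel D (\<lambda>d. indicator {0<..<1} d * ennreal (2 / (pi * sqrt (1 - d\<^sup>2))))"
    and R: "distributed M lborel R
              (\<lambda>r. indicator {0<..} r * ennreal (2 * r * g (r\<^sup>2) / (LINT u:{0..}|lborel. g u)))"
  shows
    "let sigrho = sig * sqrt (2 * (1 - rho));
         Z1 = (\<lambda>\<omega>. R \<omega> * D \<omega> * U1 \<omega>);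
         Z2 = (\<lambda>\<omega>. R \<omega> * sqrt (1 - (D \<omega>)\<^sup>2) * U2 \<omega>);
         Zrho = (\<lambda>\<omega>. (1 / sqrt (2 * (1 - rho))) * ((1 - rho) * Z1 \<omega> - sqrt (1 - rho\<^sup>2) * Z2 \<omega>))
     in distributed M lborel (\<lambda>\<omega>. A_inv sigrho (Zrho \<omega>)) (uls_pdf mu sig rho g)
        \<and> (\<forall>(N :: 'b measure) (W :: 'b \<Rightarrow> real). prob_space N \<and> distributed N lborel W (uls_pdf mu sig rho g)
             \<longrightarrow> distr N lborel (\<lambda>x. A_map sigrho (W x)) = distr M lborel Zrho)"
proof -
  define sr where "sr = sig * sqrt (2 * (1 - rho))"
  define Zrho where "Zrho \<omega> = (1 / sqrt (2 * (1 - rho))) *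
    ((1 - rho) * (R \<omega> * D \<omega> * U1 \<omega>) - sqrt (1 - rho\<^sup>2) * (R \<omega> * sqrt (1 - (D \<omega>)\<^sup>2) * U2 \<omega>))" for \<omega>
  have sr: "0 < sr"
    using sig rho by (simp add: sr_def)
  obtain \<alpha> where \<alpha>: "0 \<le> \<alpha>" "\<alpha> \<le> pi/2"
    and cos_sin: "cos \<alpha> = (1 - rho) / sqrt (2 * (1 - rho))" "sin \<alpha> = sqrt (1 - rho\<^sup>2) / sqrt (2 * (1 - rho))"
    using correlation_angle[OF rho] by blast
  have "Zrho = (\<lambda>\<omega>. R \<omega> * (cos \<alpha> * D \<omega> * U1 \<omega> - sin \<alpha> * sqrt (1 - (D \<omega>)\<^sup>2) * U2 \<omega>))"
    using rho by (simp add: Zrho_def cos_sin fun_eq_iff field_simps)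
  then have Z: "distributed M lborel Zrho (spherical_marginal_pdf g)"
    using distributed_radial_rotation[OF gen M indep U1 U2 _ _ \<alpha>] D R
    by (simp add: folded_arcsine_pdf_def [abs_def] radial_pdf_def [abs_def])
  have uls: "distributed M lborel (\<lambda>\<omega>. A_inv sr (Zrho \<omega>)) (uls_pdf mu sig rho g)"
    using distributed_A_inv[OF sr Z] uls_pdf_eq[OF gen sig rho] by (simp add: sr_def)
  have "distr N lborel (\<lambda>x. A_map sr (W x)) = distr M lborel Zrho"
    if "distributed N lborel W (uls_pdf mu sig rho g)" for N :: "'b measure" and W
    using distr_distributed_comp[OF that uls A_map_measurable] sr by (simp add: A_map_A_inv)
  with uls show ?thesis
    unfolding Let_def sr_def [symmetric] Zrho_def [abs_def] by blast
qed

end
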